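(* Let $R$ be a reduced commutative ring, $a\in R$, and $d\ge -1$ an integer. Then $\mathrm{dimv}\,R\le d$ if and only if $\mathrm{dimv}\,R_{\{a\}}\le d$.
   Context: All rings are commutative with $1$. For a reduced ring $A$ and $a\in A$, write $a^\perp=\mathrm{Ann}_A(a)$ and $(a^\perp)^\perp=\mathrm{Ann}_A(\mathrm{Ann}_A(a))$, and set $A_{\{a\}}:=A/a^\perp\times A/(a^\perp)^\perp$ (the canonical map $A\to A_{\{a\}}$ is injective and $A_{\{a\}}$ is reduced). $\mathrm{dimv}$: a graded rational monomial order on $\mathbb Z^{k}$ is given by a matrix $M\in\mathrm{Mat}_k(\mathbb N)$ which is invertible in $\mathrm{Mat}_k(\mathbb Q)$ and whose first row has all entries $>0$, by setting $e<_M f \iff Me<_{\mathrm{lex}}Mf$ (lexicographic order). For a nonzero polynomial $P\in A[X_0,\dots,X_n]$ its trailing coefficient (for $<_M$) is the coefficient of the $<_M$-smallest monomial occurring in $P$. For $n\ge 0$, $\mathrm{dimv}\,A\le n$ means: for a graded rational monomial order $<_M$ on $\mathbb Z^{n+1}$ and for all $x_0,\dots,x_n\in A$ there is $P\in A[X_0,\dots,X_n]$ with $P(x_0,\dots,x_n)=0$ whose trailing coefficient for $<_M$ equals $1$ (this condition does not depend on the choice of $M$). $\mathrm{dimv}\,A\le -1$ means that $A$ is trivial. *)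

theory Defs
  imports "HOL-Algebra.Algebra"
begin

definition reduced_ring :: "('a, 'b) ring_scheme \<Rightarrow> bool" where
  "reduced_ring R \<longleftrightarrow> cring R \<and>
     (\<forall>x \<in> carrier R. \<forall>n::nat. x [^]\<^bsub>R\<^esub> n = \<zero>\<^bsub>R\<^esub> \<longrightarrow> x = \<zero>\<^bsub>R\<^esub>)"

definition ann_elem :: "('a, 'b) ring_scheme \<Rightarrow> 'a \<Rightarrow> 'a set" where
  "ann_elem R a = {y \<in> carrier R. a \<otimes>\<^bsub>R\<^esub> y = \<zero>\<^bsub>R\<^esub>}"

definition ann_set :: "('a, 'b) ring_scheme \<Rightarrow> 'a set \<Rightarrow> 'a set" where
  "ann_set R S = {y \<in> carrier R. \<forall>z \<in> S. z \<otimes>\<^bsub>R\<^esub> y = \<zero>\<^bsub>R\<^esub>}"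

definition split_ring :: "('a, 'b) ring_scheme \<Rightarrow> 'a \<Rightarrow> ('a set \<times> 'a set) ring" where
  "split_ring R a = RDirProd (R Quot (ann_elem R a)) (R Quot (ann_set R (ann_elem R a)))"

text \<open>A matrix in Mat_k(N) is a function M :: nat => nat => nat, only entries i,j < k matter.
  It must be invertible in Mat_k(Q) and have a strictly positive first row.\<close>
definition graded_rational_matrix :: "nat \<Rightarrow> (nat \<Rightarrow> nat \<Rightarrow> nat) \<Rightarrow> bool" where
  "graded_rational_matrix k M \<longleftrightarrow>
     (\<forall>j < k. M 0 j > 0) \<and>
     (\<exists>N :: nat \<Rightarrow> nat \<Rightarrow> rat.
        (\<forall>i < k. \<forall>j < k. (\<Sum>l<k. N i l * of_nat (M l j)) = (if i = j then 1 else 0)) \<and>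
        (\<forall>i < k. \<forall>j < k. (\<Sum>l<k. of_nat (M i l) * N l j) = (if i = j then 1 else 0)))"

definition mat_vec :: "nat \<Rightarrow> (nat \<Rightarrow> nat \<Rightarrow> nat) \<Rightarrow> (nat \<Rightarrow> nat) \<Rightarrow> nat \<Rightarrow> nat" where
  "mat_vec k M e i = (\<Sum>j<k. M i j * e j)"

definition lex_less :: "nat \<Rightarrow> (nat \<Rightarrow> nat) \<Rightarrow> (nat \<Rightarrow> nat) \<Rightarrow> bool" where
  "lex_less k u v \<longleftrightarrow> (\<exists>i < k. (\<forall>j < i. u j = v j) \<and> u i < v i)"

definition monorder_less :: "nat \<Rightarrow> (nat \<Rightarrow> nat \<Rightarrow> nat) \<Rightarrow> (nat \<Rightarrow> nat) \<Rightarrow> (nat \<Rightarrow> nat) \<Rightarrow> bool" where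
  "monorder_less k M e f \<longleftrightarrow> lex_less k (mat_vec k M e) (mat_vec k M f)"

text \<open>A polynomial in R[X_0,...,X_n] is a finitely supported coefficient function on
  exponent vectors e :: nat => nat with e j = 0 for j > n.\<close>
definition exps :: "nat \<Rightarrow> (nat \<Rightarrow> nat) set" where
  "exps n = {e. \<forall>j > n. e j = 0}"

definition mpoly :: "('a, 'b) ring_scheme \<Rightarrow> nat \<Rightarrow> ((nat \<Rightarrow> nat) \<Rightarrow> 'a) \<Rightarrow> bool" where
  "mpoly R n P \<longleftrightarrow> finite {e. P e \<noteq> \<zero>\<^bsub>R\<^esub>} \<and>
     (\<forall>e. P e \<noteq> \<zero>\<^bsub>R\<^esub> \<longrightarrow> e \<in> exps n) \<and> (\<forall>e. P e \<in> carrier R)"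

definition mpoly_eval :: "('a, 'b) ring_scheme \<Rightarrow> nat \<Rightarrow> ((nat \<Rightarrow> nat) \<Rightarrow> 'a) \<Rightarrow> (nat \<Rightarrow> 'a) \<Rightarrow> 'a" where
  "mpoly_eval R n P x =
     (\<Oplus>\<^bsub>R\<^esub> e \<in> {e. P e \<noteq> \<zero>\<^bsub>R\<^esub>}. P e \<otimes>\<^bsub>R\<^esub> (\<Otimes>\<^bsub>R\<^esub> j \<in> {..n}. x j [^]\<^bsub>R\<^esub> e j))"

text \<open>The trailing coefficient (coefficient of the <_M-smallest monomial occurring in P) equals 1.
  For a nontrivial ring this forces P to be nonzero; for the trivial ring it holds for P = 0,
  in accordance with dimv(trivial ring) <= -1 <= n.\<close>
definition trailing_coeff_one :: "('a, 'b) ring_scheme \<Rightarrow> nat \<Rightarrow> (nat \<Rightarrow> nat \<Rightarrow> nat) \<Rightarrow> ((nat \<Rightarrow> nat) \<Rightarrow> 'a) \<Rightarrow> bool" where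
  "trailing_coeff_one R n M P \<longleftrightarrow>
     (\<exists>e \<in> exps n. P e = \<one>\<^bsub>R\<^esub> \<and>
        (\<forall>f. f \<noteq> e \<and> P f \<noteq> \<zero>\<^bsub>R\<^esub> \<longrightarrow> monorder_less (Suc n) M e f))"

definition dimv_le :: "('a, 'b) ring_scheme \<Rightarrow> int \<Rightarrow> bool" where
  "dimv_le R d \<longleftrightarrow>
     (if d = -1 then carrier R = {\<zero>\<^bsub>R\<^esub>}
      else (\<forall>M. graded_rational_matrix (Suc (nat d)) M \<longrightarrow>
             (\<forall>x. (\<forall>j \<le> nat d. x j \<in> carrier R) \<longrightarrow>
                (\<exists>P. mpoly R (nat d) P \<and> mpoly_eval R (nat d) P x = \<zero>\<^bsub>R\<^esub> \<and>
                     trailing_coeff_one R (nat d) M P))))"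

end

theory Submission
  imports Defs
begin

text \<open>
  For a reduced ring, an element lying in both \<open>a\<^sup>\<perp>\<close> and \<open>(a\<^sup>\<perp>)\<^sup>\<perp>\<close> squares to zero,
  so \<open>a\<^sup>\<perp> \<inter> (a\<^sup>\<perp>)\<^sup>\<perp> = 0\<close> and \<open>R\<close> is a subdirect product of its two quotients. The property
  ``every point satisfies a relation with trailing coefficient 1'' passes to surjective images
  and to finite products (multiply the relations \<open>(P, X\<^sup>e)\<close> and \<open>(X\<^sup>f, Q)\<close>, where \<open>e, f\<close> are
  the trailing exponents of \<open>P, Q\<close>). Conversely, relations over the two quotients lift to
  relations over \<open>R\<close> whose values lie in the respective ideals, and their product has value
  in the intersection, which is zero.
\<close>

lemma RDirProd_simps [simp]:
  "carrier (RDirProd A B) = carrier A \<times> carrier B"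
  "\<zero>\<^bsub>RDirProd A B\<^esub> = (\<zero>\<^bsub>A\<^esub>, \<zero>\<^bsub>B\<^esub>)"
  "\<one>\<^bsub>RDirProd A B\<^esub> = (\<one>\<^bsub>A\<^esub>, \<one>\<^bsub>B\<^esub>)"
  "p \<otimes>\<^bsub>RDirProd A B\<^esub> q = (fst p \<otimes>\<^bsub>A\<^esub> fst q, snd p \<otimes>\<^bsub>B\<^esub> snd q)"
  "p \<oplus>\<^bsub>RDirProd A B\<^esub> q = (fst p \<oplus>\<^bsub>A\<^esub> fst q, snd p \<oplus>\<^bsub>B\<^esub> snd q)"
  by (auto simp: RDirProd_def DirProd_def monoid.defs case_prod_beta)

lemma fst_ring_hom: "fst \<in> ring_hom (RDirProd A B) A"
  by (auto intro!: ring_hom_memI)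

lemma snd_ring_hom: "snd \<in> ring_hom (RDirProd A B) B"
  by (auto intro!: ring_hom_memI)

lemma RDirProd_cring:
  assumes "cring A" "cring B"
  shows "cring (RDirProd A B)"
proof -
  interpret A: cring A by fact
  interpret B: cring B by fact
  have "ring (RDirProd A B)"
    by (rule RDirProd_ring) (simp_all add: A.ring_axioms B.ring_axioms)
  then show ?thesis
    by (intro cring.intro comm_monoid.intro ring.is_monoid comm_monoid_axioms.intro)
       (auto simp: A.m_comm B.m_comm)
qed

lemma ring_hom_cringI:
  "cring A \<Longrightarrow> cring B \<Longrightarrow> h \<in> ring_hom A B \<Longrightarrow> ring_hom_cring A B h"
  by (simp add: ring_hom_cring_def ring_hom_cring_axioms_def)

lemma (in ideal) rcos_image_carrier: "(+>) I ` carrier R = carrier (R Quot I)"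
  by (auto simp: FactRing_def A_RCOSETS_def')


subsection \<open>Monomial orders\<close>

definition exp_add :: "(nat \<Rightarrow> nat) \<Rightarrow> (nat \<Rightarrow> nat) \<Rightarrow> nat \<Rightarrow> nat" where
  "exp_add e f = (\<lambda>j. e j + f j)"

lemma exp_add_exps: "e \<in> exps n \<Longrightarrow> f \<in> exps n \<Longrightarrow> exp_add e f \<in> exps n"
  by (auto simp: exps_def exp_add_def)

lemma lex_less_irrefl: "\<not> lex_less k u u"
  by (auto simp: lex_less_def)

lemma lex_less_add:
  assumes "lex_less k u v" and "lex_less k u' v' \<or> u' = v'"
  shows "lex_less k (\<lambda>i. u i + u' i) (\<lambda>i. v i + v' i)"
  using assms(2)
proof
  assume "u' = v'"
  then show ?thesis using assms(1) by (auto simp: lex_less_def)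
next
  assume "lex_less k u' v'"
  then obtain i' where i': "i' < k" "\<forall>j<i'. u' j = v' j" "u' i' < v' i'"
    by (auto simp: lex_less_def)
  obtain i where i: "i < k" "\<forall>j<i. u j = v j" "u i < v i"
    using assms(1) by (auto simp: lex_less_def)
  show ?thesis
    unfolding lex_less_def
    using i i' by (intro exI[of _ "min i i'"]) (auto simp: min_def not_le le_less)
qed

lemma monorder_less_irrefl: "\<not> monorder_less k M e e"
  by (simp add: monorder_less_def lex_less_irrefl)

lemma monorder_less_exp_add:
  assumes "monorder_less k M e f \<or> e = f" and "monorder_less k M e' f' \<or> e' = f'"
    and "e \<noteq> f \<or> e' \<noteq> f'"
  shows "monorder_less k M (exp_add e e') (exp_add f f')"
proof -
  have mat_vec_exp_add: "mat_vec k M (exp_add g g') = (\<lambda>i. mat_vec k M g i + mat_vec k M g' i)"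
    for g g'
    by (auto simp: mat_vec_def exp_add_def algebra_simps sum.distrib)
  show ?thesis
    using assms lex_less_add[of k "mat_vec k M e" "mat_vec k M f" "mat_vec k M e'" "mat_vec k M f'"]
      lex_less_add[of k "mat_vec k M e'" "mat_vec k M f'" "mat_vec k M e" "mat_vec k M f"]
    unfolding monorder_less_def mat_vec_exp_add by (auto simp: add.commute)
qed


subsection \<open>Polynomials\<close>

definition monom_eval :: "('a, 'b) ring_scheme \<Rightarrow> nat \<Rightarrow> (nat \<Rightarrow> 'a) \<Rightarrow> (nat \<Rightarrow> nat) \<Rightarrow> 'a" where
  "monom_eval R n x e = (\<Otimes>\<^bsub>R\<^esub> j \<in> {..n}. x j [^]\<^bsub>R\<^esub> e j)"

definition mpoly_mult ::
    "('a, 'b) ring_scheme \<Rightarrow> ((nat \<Rightarrow> nat) \<Rightarrow> 'a) \<Rightarrow> ((nat \<Rightarrow> nat) \<Rightarrow> 'a) \<Rightarrow> (nat \<Rightarrow> nat) \<Rightarrow> 'a" where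
  "mpoly_mult R P Q h = (\<Oplus>\<^bsub>R\<^esub> p \<in> {p \<in> {e. P e \<noteq> \<zero>\<^bsub>R\<^esub>} \<times> {e. Q e \<noteq> \<zero>\<^bsub>R\<^esub>}. exp_add (fst p) (snd p) = h}.
      P (fst p) \<otimes>\<^bsub>R\<^esub> Q (snd p))"

definition mpoly_monom :: "('a, 'b) ring_scheme \<Rightarrow> (nat \<Rightarrow> nat) \<Rightarrow> (nat \<Rightarrow> nat) \<Rightarrow> 'a" where
  "mpoly_monom R e = (\<lambda>f. if f = e then \<one>\<^bsub>R\<^esub> else \<zero>\<^bsub>R\<^esub>)"

definition trailing_monom ::
    "('a, 'b) ring_scheme \<Rightarrow> nat \<Rightarrow> (nat \<Rightarrow> nat \<Rightarrow> nat) \<Rightarrow> ((nat \<Rightarrow> nat) \<Rightarrow> 'a) \<Rightarrow> (nat \<Rightarrow> nat) \<Rightarrow> bool" where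
  "trailing_monom R n M P e \<longleftrightarrow> e \<in> exps n \<and> P e = \<one>\<^bsub>R\<^esub> \<and>
     (\<forall>f. f \<noteq> e \<and> P f \<noteq> \<zero>\<^bsub>R\<^esub> \<longrightarrow> monorder_less (Suc n) M e f)"

lemma trailing_coeff_one_iff: "trailing_coeff_one R n M P \<longleftrightarrow> (\<exists>e. trailing_monom R n M P e)"
  by (auto simp: trailing_coeff_one_def trailing_monom_def)

lemma trailing_monom_exp_add_less:
  assumes "trailing_monom R n M P e" "trailing_monom R n M Q f"
    and "P e' \<noteq> \<zero>\<^bsub>R\<^esub>" "Q f' \<noteq> \<zero>\<^bsub>R\<^esub>" "(e', f') \<noteq> (e, f)"
  shows "monorder_less (Suc n) M (exp_add e f) (exp_add e' f')"
  using assms by (intro monorder_less_exp_add) (auto simp: trailing_monom_def)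

context abelian_monoid
begin

lemma finsum_Sigma:
  assumes "finite A" "finite B" "\<And>a b. a \<in> A \<Longrightarrow> b \<in> B \<Longrightarrow> t (a, b) \<in> carrier G"
  shows "(\<Oplus>p \<in> A \<times> B. t p) = (\<Oplus>a \<in> A. \<Oplus>b \<in> B. t (a, b))"
proof -
  have "(\<Oplus>p \<in> A \<times> B. t p) = (\<Oplus>a \<in> A. \<Oplus>p \<in> {a} \<times> B. t p)"
    using assms by (subst add.finprod_UN_disjoint[symmetric])
      (auto simp: pairwise_def disjnt_def intro!: arg_cong[where f = "finsum G t"])
  also have "\<dots> = (\<Oplus>a \<in> A. \<Oplus>b \<in> B. t (a, b))"
  proof (rule finsum_cong')
    fix a assume "a \<in> A"
    have "{a} \<times> B = Pair a ` B"
      by auto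
    then show "(\<Oplus>p \<in> {a} \<times> B. t p) = (\<Oplus>b \<in> B. t (a, b))"
      using \<open>a \<in> A\<close> assms by (simp only:) (rule finsum_reindex, auto simp: inj_on_def)
  qed (use assms in \<open>auto intro!: finsum_closed\<close>)
  finally show ?thesis .
qed

lemma finsum_fibres:
  assumes "finite A" "\<And>p. p \<in> A \<Longrightarrow> t p \<in> carrier G"
  shows "(\<Oplus>h \<in> g ` A. \<Oplus>p \<in> {p \<in> A. g p = h}. t p) = (\<Oplus>p \<in> A. t p)"
proof -
  have "(\<Oplus>h \<in> g ` A. \<Oplus>p \<in> {p \<in> A. g p = h}. t p) = (\<Oplus>p \<in> (\<Union>h \<in> g ` A. {p \<in> A. g p = h}). t p)"
    by (rule add.finprod_UN_disjoint[symmetric]) (use assms in \<open>auto simp: pairwise_def disjnt_def\<close>)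
  also have "(\<Union>h \<in> g ` A. {p \<in> A. g p = h}) = A"
    by auto
  finally show ?thesis .
qed

end

context cring
begin

lemma monom_eval_closed: "(\<And>j. j \<le> n \<Longrightarrow> x j \<in> carrier R) \<Longrightarrow> monom_eval R n x e \<in> carrier R"
  unfolding monom_eval_def by (auto intro!: finprod_closed)

lemma monom_eval_exp_add:
  assumes "\<And>j. j \<le> n \<Longrightarrow> x j \<in> carrier R"
  shows "monom_eval R n x (exp_add e f) = monom_eval R n x e \<otimes> monom_eval R n x f"
proof -
  have "monom_eval R n x (exp_add e f) = (\<Otimes>j \<in> {..n}. x j [^] e j \<otimes> x j [^] f j)"
    unfolding monom_eval_def exp_add_def by (rule finprod_cong') (auto simp: assms nat_pow_mult)
  also have "\<dots> = monom_eval R n x e \<otimes> monom_eval R n x f"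
    unfolding monom_eval_def by (rule finprod_multf) (auto simp: assms)
  finally show ?thesis .
qed

lemma mpoly_eval_superset:
  assumes "finite S" "{e. P e \<noteq> \<zero>} \<subseteq> S" "\<And>e. P e \<in> carrier R"
    and "\<And>j. j \<le> n \<Longrightarrow> x j \<in> carrier R"
  shows "mpoly_eval R n P x = (\<Oplus>e \<in> S. P e \<otimes> monom_eval R n x e)"
  unfolding mpoly_eval_def monom_eval_def[symmetric]
  by (rule add.finprod_mono_neutral_cong_left) (use assms monom_eval_closed in auto)

lemma mpoly_eval_cong:
  assumes "\<And>j. j \<le> n \<Longrightarrow> x j = y j" "\<And>j. j \<le> n \<Longrightarrow> y j \<in> carrier R"
  shows "mpoly_eval R n P x = mpoly_eval R n P y"
proof -
  have "monom_eval R n x e = monom_eval R n y e" for e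
    unfolding monom_eval_def by (rule finprod_cong') (auto simp: assms)
  then show ?thesis
    unfolding mpoly_eval_def monom_eval_def[symmetric] by simp
qed

lemma mpoly_eval_closed:
  assumes "mpoly R n P" "\<And>j. j \<le> n \<Longrightarrow> x j \<in> carrier R"
  shows "mpoly_eval R n P x \<in> carrier R"
  using assms monom_eval_closed[of n x] unfolding mpoly_eval_def mpoly_def monom_eval_def[symmetric]
  by (auto intro!: finsum_closed)

lemma mpoly_monom: "e \<in> exps n \<Longrightarrow> mpoly R n (mpoly_monom R e)"
  by (auto simp: mpoly_def mpoly_monom_def)

lemma trailing_monom_mpoly_monom: "e \<in> exps n \<Longrightarrow> trailing_monom R n M (mpoly_monom R e) e"
  by (simp add: trailing_monom_def mpoly_monom_def)

lemma mpoly_mult_closed: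
  "(\<And>e. P e \<in> carrier R) \<Longrightarrow> (\<And>e. Q e \<in> carrier R) \<Longrightarrow> mpoly_mult R P Q h \<in> carrier R"
  unfolding mpoly_mult_def by (auto intro!: finsum_closed)

lemma mpoly_mult_outside:
  assumes "h \<notin> (\<lambda>p. exp_add (fst p) (snd p)) ` ({e. P e \<noteq> \<zero>} \<times> {e. Q e \<noteq> \<zero>})"
  shows "mpoly_mult R P Q h = \<zero>"
proof -
  have "{p \<in> {e. P e \<noteq> \<zero>} \<times> {e. Q e \<noteq> \<zero>}. exp_add (fst p) (snd p) = h} = {}"
    using assms by force
  then show ?thesis
    unfolding mpoly_mult_def by (simp only: finsum_empty)
qed

lemma mpoly_mpoly_mult:
  assumes "mpoly R n P" "mpoly R n Q"
  shows "mpoly R n (mpoly_mult R P Q)"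
proof -
  let ?H = "(\<lambda>p. exp_add (fst p) (snd p)) ` ({e. P e \<noteq> \<zero>} \<times> {e. Q e \<noteq> \<zero>})"
  have supp: "{e. mpoly_mult R P Q e \<noteq> \<zero>} \<subseteq> ?H"
    using mpoly_mult_outside by blast
  moreover have "finite ?H"
    using assms unfolding mpoly_def by auto
  moreover have "?H \<subseteq> exps n"
    using assms exp_add_exps unfolding mpoly_def by auto
  ultimately show ?thesis
    using assms mpoly_mult_closed[of P Q] unfolding mpoly_def by (auto intro: finite_subset)
qed

lemma mpoly_eval_mpoly_mult_pairs:
  assumes "mpoly R n P" "mpoly R n Q" "\<And>j. j \<le> n \<Longrightarrow> x j \<in> carrier R"
  shows "mpoly_eval R n (mpoly_mult R P Q) x = (\<Oplus>p \<in> {e. P e \<noteq> \<zero>} \<times> {e. Q e \<noteq> \<zero>}.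
    (P (fst p) \<otimes> monom_eval R n x (fst p)) \<otimes> (Q (snd p) \<otimes> monom_eval R n x (snd p)))"
    (is "_ = (\<Oplus>p \<in> ?SP \<times> ?SQ. ?t p)")
proof -
  define g where "g p = exp_add (fst p) (snd p)" for p :: "(nat \<Rightarrow> nat) \<times> (nat \<Rightarrow> nat)"
  have fin: "finite ?SP" "finite ?SQ" and cP: "\<And>e. P e \<in> carrier R" and cQ: "\<And>e. Q e \<in> carrier R"
    using assms unfolding mpoly_def by auto
  have cm: "\<And>e. monom_eval R n x e \<in> carrier R"
    using monom_eval_closed assms(3) by blast
  have ct: "?t p \<in> carrier R" for p
    using cP cQ cm by auto
  have "mpoly_eval R n (mpoly_mult R P Q) x
      = (\<Oplus>h \<in> g ` (?SP \<times> ?SQ). mpoly_mult R P Q h \<otimes> monom_eval R n x h)"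
    by (rule mpoly_eval_superset)
      (use fin mpoly_mult_outside cP cQ mpoly_mult_closed assms(3) in \<open>auto simp: g_def\<close>)
  also have "\<dots> = (\<Oplus>h \<in> g ` (?SP \<times> ?SQ). \<Oplus>p \<in> {p \<in> ?SP \<times> ?SQ. g p = h}. ?t p)"
  proof (rule finsum_cong')
    fix h
    have "mpoly_mult R P Q h \<otimes> monom_eval R n x h
        = (\<Oplus>p \<in> {p \<in> ?SP \<times> ?SQ. g p = h}. (P (fst p) \<otimes> Q (snd p)) \<otimes> monom_eval R n x h)"
      unfolding mpoly_mult_def g_def by (rule finsum_ldistr) (use fin cP cQ cm in auto)
    also have "\<dots> = (\<Oplus>p \<in> {p \<in> ?SP \<times> ?SQ. g p = h}. ?t p)"
      by (rule finsum_cong')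
        (use ct cP cQ cm in \<open>auto simp: g_def monom_eval_exp_add[OF assms(3)] m_ac\<close>)
    finally show "mpoly_mult R P Q h \<otimes> monom_eval R n x h
        = (\<Oplus>p \<in> {p \<in> ?SP \<times> ?SQ. g p = h}. ?t p)" .
  qed (use ct in \<open>auto intro!: finsum_closed\<close>)
  also have "\<dots> = (\<Oplus>p \<in> ?SP \<times> ?SQ. ?t p)"
    by (rule finsum_fibres) (use fin ct in auto)
  finally show ?thesis .
qed

lemma mpoly_eval_mpoly_mult:
  assumes "mpoly R n P" "mpoly R n Q" "\<And>j. j \<le> n \<Longrightarrow> x j \<in> carrier R"
  shows "mpoly_eval R n (mpoly_mult R P Q) x = mpoly_eval R n P x \<otimes> mpoly_eval R n Q x"
proof -
  define SP where "SP = {e. P e \<noteq> \<zero>}"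
  define SQ where "SQ = {e. Q e \<noteq> \<zero>}"
  have fin: "finite SP" "finite SQ" and cP: "\<And>e. P e \<in> carrier R" and cQ: "\<And>e. Q e \<in> carrier R"
    using assms unfolding mpoly_def SP_def SQ_def by auto
  have cm: "\<And>e. monom_eval R n x e \<in> carrier R"
    using monom_eval_closed assms(3) by blast
  define t where "t p = (P (fst p) \<otimes> monom_eval R n x (fst p)) \<otimes> (Q (snd p) \<otimes> monom_eval R n x (snd p))"
    for p
  have "mpoly_eval R n (mpoly_mult R P Q) x = (\<Oplus>p \<in> SP \<times> SQ. t p)"
    using mpoly_eval_mpoly_mult_pairs[OF assms] by (simp add: SP_def SQ_def t_def)
  also have "\<dots> = (\<Oplus>e \<in> SP. \<Oplus>f \<in> SQ. t (e, f))"
    by (rule finsum_Sigma) (use fin cP cQ cm in \<open>auto simp: t_def\<close>)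
  also have "\<dots> = (\<Oplus>e \<in> SP. \<Oplus>f \<in> SQ. (P e \<otimes> monom_eval R n x e) \<otimes> (Q f \<otimes> monom_eval R n x f))"
    unfolding t_def by simp
  also have "\<dots> = (\<Oplus>e \<in> SP. (P e \<otimes> monom_eval R n x e) \<otimes> (\<Oplus>f \<in> SQ. Q f \<otimes> monom_eval R n x f))"
    by (intro finsum_cong' finsum_rdistr[symmetric]) (use fin cP cQ cm in \<open>auto intro!: finsum_closed\<close>)
  also have "\<dots> = (\<Oplus>e \<in> SP. P e \<otimes> monom_eval R n x e) \<otimes> (\<Oplus>f \<in> SQ. Q f \<otimes> monom_eval R n x f)"
    by (rule finsum_ldistr[symmetric]) (use fin cP cQ cm in \<open>auto intro!: finsum_closed\<close>)
  also have "\<dots> = mpoly_eval R n P x \<otimes> mpoly_eval R n Q x"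
    unfolding mpoly_eval_def monom_eval_def SP_def SQ_def ..
  finally show ?thesis .
qed

lemma trailing_monom_mpoly_mult:
  assumes "\<And>e. P e \<in> carrier R" "\<And>e. Q e \<in> carrier R"
    and P: "trailing_monom R n M P e" and Q: "trailing_monom R n M Q f"
  shows "trailing_monom R n M (mpoly_mult R P Q) (exp_add e f)"
proof (cases "\<one> = \<zero>")
  case True
  have "mpoly_mult R P Q h \<in> carrier R" for h
    using assms(1,2) by (rule mpoly_mult_closed)
  then have "mpoly_mult R P Q h = \<zero>" for h
    using one_zeroD[OF True] by blast
  then show ?thesis
    using P Q True exp_add_exps unfolding trailing_monom_def by simp
next
  case False
  note less = trailing_monom_exp_add_less[OF P Q]
  have "{p \<in> {e. P e \<noteq> \<zero>} \<times> {e. Q e \<noteq> \<zero>}. exp_add (fst p) (snd p) = exp_add e f} = {(e, f)}"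
  proof (intro equalityI subsetI)
    fix p assume p: "p \<in> {p \<in> {e. P e \<noteq> \<zero>} \<times> {e. Q e \<noteq> \<zero>}. exp_add (fst p) (snd p) = exp_add e f}"
    show "p \<in> {(e, f)}"
    proof (rule ccontr)
      assume "p \<notin> {(e, f)}"
      then have "monorder_less (Suc n) M (exp_add e f) (exp_add (fst p) (snd p))"
        using p by (intro less) (auto simp: prod_eq_iff)
      then show False
        using p monorder_less_irrefl by auto
    qed
  qed (use P Q False in \<open>auto simp: trailing_monom_def\<close>)
  then have "mpoly_mult R P Q (exp_add e f) = \<one>"
    using P Q unfolding mpoly_mult_def trailing_monom_def by simp
  moreover have "monorder_less (Suc n) M (exp_add e f) h"
    if h: "h \<noteq> exp_add e f" "mpoly_mult R P Q h \<noteq> \<zero>" for h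
  proof -
    have "h \<in> (\<lambda>p. exp_add (fst p) (snd p)) ` ({e. P e \<noteq> \<zero>} \<times> {e. Q e \<noteq> \<zero>})"
      using h(2) mpoly_mult_outside by blast
    then obtain e' f' where "P e' \<noteq> \<zero>" "Q f' \<noteq> \<zero>" "h = exp_add e' f'"
      by auto
    moreover from this(3) h(1) have "(e', f') \<noteq> (e, f)"
      by auto
    ultimately show ?thesis
      using less by blast
  qed
  ultimately show ?thesis
    using P Q exp_add_exps unfolding trailing_monom_def by blast
qed


lemma trailing_coeff_one_mpoly_mult:
  assumes "mpoly R n P" "mpoly R n Q" "trailing_coeff_one R n M P" "trailing_coeff_one R n M Q"
  shows "trailing_coeff_one R n M (mpoly_mult R P Q)"
proof -
  obtain e f where "trailing_monom R n M P e" "trailing_monom R n M Q f"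
    using assms(3,4) unfolding trailing_coeff_one_iff by blast
  moreover have "\<And>e. P e \<in> carrier R" "\<And>e. Q e \<in> carrier R"
    using assms(1,2) unfolding mpoly_def by blast+
  ultimately show ?thesis
    unfolding trailing_coeff_one_iff by (blast intro: trailing_monom_mpoly_mult)
qed
end

context ring_hom_cring
begin

lemma monom_eval_hom:
  "(\<And>j. j \<le> n \<Longrightarrow> x j \<in> carrier R) \<Longrightarrow> h (monom_eval R n x e) = monom_eval S n (h \<circ> x) e"
  unfolding monom_eval_def by (subst hom_finprod) (auto intro!: S.finprod_cong' hom_nat_pow)

lemma mpoly_hom:
  assumes "mpoly R n P"
  shows "mpoly S n (h \<circ> P)"
proof -
  have "{e. h (P e) \<noteq> \<zero>\<^bsub>S\<^esub>} \<subseteq> {e. P e \<noteq> \<zero>}"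
    by auto
  then show ?thesis
    using assms unfolding mpoly_def by (auto intro: finite_subset)
qed

lemma trailing_coeff_one_hom: "trailing_coeff_one R n M P \<Longrightarrow> trailing_coeff_one S n M (h \<circ> P)"
  unfolding trailing_coeff_one_def by force

lemma mpoly_eval_hom:
  assumes "mpoly R n P" "\<And>j. j \<le> n \<Longrightarrow> x j \<in> carrier R"
  shows "h (mpoly_eval R n P x) = mpoly_eval S n (h \<circ> P) (h \<circ> x)"
proof -
  have fin: "finite {e. P e \<noteq> \<zero>}" and cP: "\<And>e. P e \<in> carrier R"
    using assms(1) unfolding mpoly_def by auto
  have "h (mpoly_eval R n P x) = (\<Oplus>\<^bsub>S\<^esub> e \<in> {e. P e \<noteq> \<zero>}. h (P e) \<otimes>\<^bsub>S\<^esub> monom_eval S n (h \<circ> x) e)"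
    unfolding mpoly_eval_def monom_eval_def[symmetric]
    using cP assms(2) R.monom_eval_closed[of n x] S.monom_eval_closed[of n "h \<circ> x"] monom_eval_hom[of n x]
    by (subst hom_finsum) (auto intro!: S.finsum_cong')
  also have "\<dots> = mpoly_eval S n (h \<circ> P) (h \<circ> x)"
  proof -
    have "{e. h (P e) \<noteq> \<zero>\<^bsub>S\<^esub>} \<subseteq> {e. P e \<noteq> \<zero>}"
      by auto
    then show ?thesis
      using S.mpoly_eval_superset[of "{e. P e \<noteq> \<zero>}" "h \<circ> P" n "h \<circ> x"] fin cP assms(2)
      by auto
  qed
  finally show ?thesis .
qed

end

lemma mpoly_pair:
  assumes "mpoly A n P" "mpoly B n Q"
  shows "mpoly (RDirProd A B) n (\<lambda>e. (P e, Q e))"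
proof -
  have "{e. (P e, Q e) \<noteq> \<zero>\<^bsub>RDirProd A B\<^esub>} \<subseteq> {e. P e \<noteq> \<zero>\<^bsub>A\<^esub>} \<union> {e. Q e \<noteq> \<zero>\<^bsub>B\<^esub>}"
    by auto
  then show ?thesis
    using assms unfolding mpoly_def by (auto intro: finite_subset)
qed

lemma trailing_monom_pair:
  "trailing_monom A n M P e \<Longrightarrow> trailing_monom B n M Q e
    \<Longrightarrow> trailing_monom (RDirProd A B) n M (\<lambda>e. (P e, Q e)) e"
  unfolding trailing_monom_def by auto

lemma mpoly_eval_pair:
  assumes A: "cring A" and B: "cring B" and "mpoly A n P" "mpoly B n Q"
    and x: "\<And>j. j \<le> n \<Longrightarrow> x j \<in> carrier (RDirProd A B)"
  shows "mpoly_eval (RDirProd A B) n (\<lambda>e. (P e, Q e)) x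
    = (mpoly_eval A n P (fst \<circ> x), mpoly_eval B n Q (snd \<circ> x))"
proof -
  have AB: "cring (RDirProd A B)"
    using A B by (rule RDirProd_cring)
  interpret fst: ring_hom_cring "RDirProd A B" A fst
    using AB A fst_ring_hom by (rule ring_hom_cringI)
  interpret snd: ring_hom_cring "RDirProd A B" B snd
    using AB B snd_ring_hom by (rule ring_hom_cringI)
  have "mpoly (RDirProd A B) n (\<lambda>e. (P e, Q e))"
    using assms(3,4) by (rule mpoly_pair)
  then show ?thesis
    using fst.mpoly_eval_hom snd.mpoly_eval_hom x by (simp add: prod_eq_iff comp_def)
qed

subsection \<open>Relations with trailing coefficient one\<close>

definition trailing_one_relation ::
    "('a, 'b) ring_scheme \<Rightarrow> nat \<Rightarrow> (nat \<Rightarrow> nat \<Rightarrow> nat) \<Rightarrow> (nat \<Rightarrow> 'a) \<Rightarrow> bool" where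
  "trailing_one_relation R n M x \<longleftrightarrow>
     (\<exists>P. mpoly R n P \<and> mpoly_eval R n P x = \<zero>\<^bsub>R\<^esub> \<and> trailing_coeff_one R n M P)"

lemma dimv_le_iff_trailing_one_relation:
  assumes "d \<noteq> -1"
  shows "dimv_le R d \<longleftrightarrow> (\<forall>M. graded_rational_matrix (Suc (nat d)) M \<longrightarrow>
     (\<forall>x. (\<forall>j \<le> nat d. x j \<in> carrier R) \<longrightarrow> trailing_one_relation R (nat d) M x))"
  using assms unfolding dimv_le_def trailing_one_relation_def by simp

lemma (in cring) trailing_one_relation_cong:
  assumes "trailing_one_relation R n M x"
    and "\<And>j. j \<le> n \<Longrightarrow> x j = y j" "\<And>j. j \<le> n \<Longrightarrow> y j \<in> carrier R"
  shows "trailing_one_relation R n M y"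
  using assms mpoly_eval_cong[of n x y] unfolding trailing_one_relation_def by auto

lemma (in ring_hom_cring) trailing_one_relation_hom:
  assumes "trailing_one_relation R n M x" "\<And>j. j \<le> n \<Longrightarrow> x j \<in> carrier R"
  shows "trailing_one_relation S n M (h \<circ> x)"
proof -
  obtain P where P: "mpoly R n P" "mpoly_eval R n P x = \<zero>" "trailing_coeff_one R n M P"
    using assms(1) unfolding trailing_one_relation_def by blast
  have "h (mpoly_eval R n P x) = mpoly_eval S n (h \<circ> P) (h \<circ> x)"
    using P(1) assms(2) by (rule mpoly_eval_hom)
  then have "mpoly_eval S n (h \<circ> P) (h \<circ> x) = \<zero>\<^bsub>S\<^esub>"
    using P(2) by simp
  then show ?thesis
    using mpoly_hom[OF P(1)] trailing_coeff_one_hom[OF P(3)]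
    unfolding trailing_one_relation_def by blast
qed

lemma trailing_one_relation_RDirProd:
  assumes A: "cring A" and B: "cring B"
    and x: "\<And>j. j \<le> n \<Longrightarrow> x j \<in> carrier (RDirProd A B)"
    and rel_A: "trailing_one_relation A n M (fst \<circ> x)"
    and rel_B: "trailing_one_relation B n M (snd \<circ> x)"
  shows "trailing_one_relation (RDirProd A B) n M x"
proof -
  interpret A: cring A by fact
  interpret B: cring B by fact
  interpret AB: cring "RDirProd A B"
    using A B by (rule RDirProd_cring)
  obtain P e where P: "mpoly A n P" "mpoly_eval A n P (fst \<circ> x) = \<zero>\<^bsub>A\<^esub>" "trailing_monom A n M P e"
    using rel_A unfolding trailing_one_relation_def trailing_coeff_one_iff by blast
  obtain Q f where Q: "mpoly B n Q" "mpoly_eval B n Q (snd \<circ> x) = \<zero>\<^bsub>B\<^esub>" "trailing_monom B n M Q f"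
    using rel_B unfolding trailing_one_relation_def trailing_coeff_one_iff by blast
  have e: "e \<in> exps n" and f: "f \<in> exps n"
    using P(3) Q(3) by (auto simp: trailing_monom_def)
  text \<open>\<open>U = (P, X\<^sup>e)\<close> and \<open>V = (X\<^sup>f, Q)\<close> both have trailing coefficient \<open>(\<one>, \<one>)\<close>.\<close>
  define U where "U = (\<lambda>g. (P g, mpoly_monom B e g))"
  define V where "V = (\<lambda>g. (mpoly_monom A f g, Q g))"
  have U: "mpoly (RDirProd A B) n U" "trailing_monom (RDirProd A B) n M U e"
    unfolding U_def using P(1,3) B.mpoly_monom[OF e] B.trailing_monom_mpoly_monom[OF e]
    by (auto intro: mpoly_pair trailing_monom_pair)
  have V: "mpoly (RDirProd A B) n V" "trailing_monom (RDirProd A B) n M V f"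
    unfolding V_def using Q(1,3) A.mpoly_monom[OF f] A.trailing_monom_mpoly_monom[OF f]
    by (auto intro: mpoly_pair trailing_monom_pair)
  have "mpoly_eval (RDirProd A B) n U x \<in> {\<zero>\<^bsub>A\<^esub>} \<times> carrier B"
    unfolding U_def using mpoly_eval_pair[OF A B P(1) B.mpoly_monom[OF e] x] P(2)
      B.mpoly_eval_closed[OF B.mpoly_monom[OF e], of "snd \<circ> x"] x by (auto simp: mem_Times_iff)
  moreover have "mpoly_eval (RDirProd A B) n V x \<in> carrier A \<times> {\<zero>\<^bsub>B\<^esub>}"
    unfolding V_def using mpoly_eval_pair[OF A B A.mpoly_monom[OF f] Q(1) x] Q(2)
      A.mpoly_eval_closed[OF A.mpoly_monom[OF f], of "fst \<circ> x"] x by (auto simp: mem_Times_iff)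
  ultimately have "mpoly_eval (RDirProd A B) n (mpoly_mult (RDirProd A B) U V) x = \<zero>\<^bsub>RDirProd A B\<^esub>"
    using AB.mpoly_eval_mpoly_mult[OF U(1) V(1) x] by auto
  moreover have "trailing_coeff_one (RDirProd A B) n M (mpoly_mult (RDirProd A B) U V)"
    by (rule AB.trailing_coeff_one_mpoly_mult[OF U(1) V(1)])
      (use U(2) V(2) in \<open>auto simp: trailing_coeff_one_iff\<close>)
  ultimately show ?thesis
    unfolding trailing_one_relation_def using AB.mpoly_mpoly_mult[OF U(1) V(1)] by blast
qed

lemma (in ring_hom_cring) mpoly_lift:
  assumes surj: "h ` carrier R = carrier S"
    and Q: "mpoly S n Q" "trailing_coeff_one S n M Q"
  shows "\<exists>P. mpoly R n P \<and> trailing_coeff_one R n M P \<and> h \<circ> P = Q"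
proof -
  obtain e where e: "trailing_monom S n M Q e"
    using Q(2) unfolding trailing_coeff_one_iff by blast
  define P where
    "P f = (if f = e then \<one> else if Q f = \<zero>\<^bsub>S\<^esub> then \<zero> else inv_into (carrier R) h (Q f))" for f
  have Q_carrier: "Q f \<in> h ` carrier R" for f
    using Q(1) surj unfolding mpoly_def by auto
  have P_carrier: "P f \<in> carrier R" for f
    using Q_carrier[of f] by (auto simp: P_def inv_into_into)
  have hP: "h \<circ> P = Q"
    using e Q_carrier by (auto simp: P_def trailing_monom_def f_inv_into_f)
  have supp: "Q f \<noteq> \<zero>\<^bsub>S\<^esub>" if "f \<noteq> e" "P f \<noteq> \<zero>" for f
    using that by (auto simp: P_def)
  have "{f. P f \<noteq> \<zero>} \<subseteq> insert e {f. Q f \<noteq> \<zero>\<^bsub>S\<^esub>}"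
    using supp by auto
  then have "mpoly R n P"
    using Q(1) e supp P_carrier unfolding mpoly_def trailing_monom_def by (auto intro: finite_subset)
  moreover have "trailing_monom R n M P e"
    using e supp unfolding trailing_monom_def by (auto simp: P_def)
  ultimately show ?thesis
    using hP unfolding trailing_coeff_one_iff by blast
qed

lemma (in ring_hom_cring) trailing_one_relation_lift:
  assumes surj: "h ` carrier R = carrier S"
    and x: "\<And>j. j \<le> n \<Longrightarrow> x j \<in> carrier R"
    and rel: "trailing_one_relation S n M (h \<circ> x)"
  shows "\<exists>P. mpoly R n P \<and> trailing_coeff_one R n M P \<and> h (mpoly_eval R n P x) = \<zero>\<^bsub>S\<^esub>"
proof -
  obtain Q where Q: "mpoly S n Q" "mpoly_eval S n Q (h \<circ> x) = \<zero>\<^bsub>S\<^esub>" "trailing_coeff_one S n M Q"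
    using rel unfolding trailing_one_relation_def by blast
  obtain P where P: "mpoly R n P" "trailing_coeff_one R n M P" "h \<circ> P = Q"
    using mpoly_lift[OF surj Q(1,3)] by blast
  have "h (mpoly_eval R n P x) = mpoly_eval S n (h \<circ> P) (h \<circ> x)"
    using P(1) x by (rule mpoly_eval_hom)
  then show ?thesis
    using P Q(2) by auto
qed

lemma trailing_one_relation_subdirect:
  assumes h1: "ring_hom_cring R S1 h1" "h1 ` carrier R = carrier S1"
    and h2: "ring_hom_cring R S2 h2" "h2 ` carrier R = carrier S2"
    and joint_inj: "\<And>r. r \<in> carrier R \<Longrightarrow> h1 r = \<zero>\<^bsub>S1\<^esub> \<Longrightarrow> h2 r = \<zero>\<^bsub>S2\<^esub> \<Longrightarrow> r = \<zero>\<^bsub>R\<^esub>"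
    and x: "\<And>j. j \<le> n \<Longrightarrow> x j \<in> carrier R"
    and rel1: "trailing_one_relation S1 n M (h1 \<circ> x)"
    and rel2: "trailing_one_relation S2 n M (h2 \<circ> x)"
  shows "trailing_one_relation R n M x"
proof -
  interpret h1: ring_hom_cring R S1 h1 by fact
  interpret h2: ring_hom_cring R S2 h2 by fact
  obtain P1 where P1: "mpoly R n P1" "trailing_coeff_one R n M P1" "h1 (mpoly_eval R n P1 x) = \<zero>\<^bsub>S1\<^esub>"
    using h1.trailing_one_relation_lift[OF h1(2) x rel1] by blast
  obtain P2 where P2: "mpoly R n P2" "trailing_coeff_one R n M P2" "h2 (mpoly_eval R n P2 x) = \<zero>\<^bsub>S2\<^esub>"
    using h2.trailing_one_relation_lift[OF h2(2) x rel2] by blast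
  define W where "W = mpoly_mult R P1 P2"
  have W_mpoly: "mpoly R n W"
    unfolding W_def using P1(1) P2(1) by (rule h1.R.mpoly_mpoly_mult)
  have W_trailing: "trailing_coeff_one R n M W"
    unfolding W_def using P1(1) P2(1) P1(2) P2(2) by (rule h1.R.trailing_coeff_one_mpoly_mult)
  have W_eval: "mpoly_eval R n W x = mpoly_eval R n P1 x \<otimes>\<^bsub>R\<^esub> mpoly_eval R n P2 x"
    unfolding W_def using P1(1) P2(1) x by (rule h1.R.mpoly_eval_mpoly_mult)
  have closed: "mpoly_eval R n P1 x \<in> carrier R" "mpoly_eval R n P2 x \<in> carrier R"
    using P1(1) P2(1) x by (auto intro: h1.R.mpoly_eval_closed)
  have "h1 (mpoly_eval R n W x) = \<zero>\<^bsub>S1\<^esub>" and "h2 (mpoly_eval R n W x) = \<zero>\<^bsub>S2\<^esub>"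
    using P1(3) P2(3) closed unfolding W_eval by simp_all
  then have "mpoly_eval R n W x = \<zero>\<^bsub>R\<^esub>"
    by (intro joint_inj h1.R.mpoly_eval_closed[OF W_mpoly x])
  then show ?thesis
    using W_mpoly W_trailing unfolding trailing_one_relation_def by blast
qed

subsection \<open>Transfer of the dimension bound\<close>

lemma (in ring_hom_cring) dimv_le_image:
  assumes surj: "h ` carrier R = carrier S" and "dimv_le R d"
  shows "dimv_le S d"
proof (cases "d = -1")
  case True
  then show ?thesis
    using assms by (auto simp: dimv_le_def)
next
  case False
  show ?thesis
    unfolding dimv_le_iff_trailing_one_relation[OF False]
  proof (intro allI impI)
    fix M y
    assume M: "graded_rational_matrix (Suc (nat d)) M" and y: "\<forall>j \<le> nat d. y j \<in> carrier S"
    define x where "x j = inv_into (carrier R) h (y j)" for j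
    have x: "x j \<in> carrier R" and hx: "h (x j) = y j" if "j \<le> nat d" for j
      using y that surj by (auto simp: x_def inv_into_into f_inv_into_f)
    have "trailing_one_relation R (nat d) M x"
      using assms(2) M x unfolding dimv_le_iff_trailing_one_relation[OF False] by blast
    then have "trailing_one_relation S (nat d) M (h \<circ> x)"
      by (rule trailing_one_relation_hom) (use x in auto)
    then show "trailing_one_relation S (nat d) M y"
      by (rule S.trailing_one_relation_cong) (use hx y in auto)
  qed
qed

lemma dimv_le_RDirProd:
  assumes A: "cring A" and B: "cring B" and "dimv_le A d" "dimv_le B d"
  shows "dimv_le (RDirProd A B) d"
proof (cases "d = -1")
  case True
  then show ?thesis
    using assms by (auto simp: dimv_le_def)
next
  case False
  show ?thesis
    unfolding dimv_le_iff_trailing_one_relation[OF False]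
  proof (intro allI impI)
    fix M x
    assume M: "graded_rational_matrix (Suc (nat d)) M"
      and x: "\<forall>j \<le> nat d. x j \<in> carrier (RDirProd A B)"
    have "trailing_one_relation A (nat d) M (fst \<circ> x)" "trailing_one_relation B (nat d) M (snd \<circ> x)"
      using assms(3,4) M x unfolding dimv_le_iff_trailing_one_relation[OF False] by (auto simp: mem_Times_iff)
    then show "trailing_one_relation (RDirProd A B) (nat d) M x"
      using A B x by (intro trailing_one_relation_RDirProd) auto
  qed
qed

lemma dimv_le_subdirect:
  assumes h1: "ring_hom_cring R S1 h1" "h1 ` carrier R = carrier S1"
    and h2: "ring_hom_cring R S2 h2" "h2 ` carrier R = carrier S2"
    and joint_inj: "\<And>r. r \<in> carrier R \<Longrightarrow> h1 r = \<zero>\<^bsub>S1\<^esub> \<Longrightarrow> h2 r = \<zero>\<^bsub>S2\<^esub> \<Longrightarrow> r = \<zero>\<^bsub>R\<^esub>"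
    and "dimv_le S1 d" "dimv_le S2 d"
  shows "dimv_le R d"
proof (cases "d = -1")
  case True
  interpret ring_hom_cring R S1 h1 by fact
  have "h1 r = \<zero>\<^bsub>S1\<^esub>" "h2 r = \<zero>\<^bsub>S2\<^esub>" if "r \<in> carrier R" for r
    using assms(6,7) True that h1(2) h2(2) unfolding dimv_le_def by auto
  then show ?thesis
    using True joint_inj unfolding dimv_le_def by auto
next
  case False
  show ?thesis
    unfolding dimv_le_iff_trailing_one_relation[OF False]
  proof (intro allI impI)
    fix M x
    assume M: "graded_rational_matrix (Suc (nat d)) M" and x: "\<forall>j \<le> nat d. x j \<in> carrier R"
    have "h1 (x j) \<in> carrier S1" "h2 (x j) \<in> carrier S2" if "j \<le> nat d" for j
      using x that h1(2) h2(2) by auto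
    then have "trailing_one_relation S1 (nat d) M (h1 \<circ> x)" "trailing_one_relation S2 (nat d) M (h2 \<circ> x)"
      using assms(6,7) M unfolding dimv_le_iff_trailing_one_relation[OF False] by auto
    then show "trailing_one_relation R (nat d) M x"
      using h1 h2 joint_inj x by (intro trailing_one_relation_subdirect[of R S1 h1 S2 h2]) auto
  qed
qed

lemma (in cring) dimv_le_iff_RDirProd_Quot:
  assumes I: "ideal I R" and J: "ideal J R" and disjoint: "I \<inter> J \<subseteq> {\<zero>}"
  shows "dimv_le R d \<longleftrightarrow> dimv_le (RDirProd (R Quot I) (R Quot J)) d"
proof -
  interpret I: ideal I R by fact
  interpret J: ideal J R by fact
  have hI: "ring_hom_cring R (R Quot I) ((+>) I)" and hJ: "ring_hom_cring R (R Quot J) ((+>) J)"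
    using I.rcos_ring_hom_cring J.rcos_ring_hom_cring is_cring by blast+
  have cI: "cring (R Quot I)" and cJ: "cring (R Quot J)"
    using I.quotient_is_cring J.quotient_is_cring is_cring by blast+
  have joint_inj: "r = \<zero>"
    if "r \<in> carrier R" "I +> r = \<zero>\<^bsub>R Quot I\<^esub>" "J +> r = \<zero>\<^bsub>R Quot J\<^esub>" for r
  proof -
    have "r \<in> I" "r \<in> J"
      using that by (auto intro: I.rcos_const_imp_mem J.rcos_const_imp_mem simp: FactRing_def)
    then show ?thesis
      using disjoint by blast
  qed
  show ?thesis
  proof
    assume "dimv_le R d"
    then show "dimv_le (RDirProd (R Quot I) (R Quot J)) d"
      using cI cJ ring_hom_cring.dimv_le_image[OF hI I.rcos_image_carrier]
        ring_hom_cring.dimv_le_image[OF hJ J.rcos_image_carrier]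
      by (intro dimv_le_RDirProd)
  next
    assume prod: "dimv_le (RDirProd (R Quot I) (R Quot J)) d"
    have cIJ: "cring (RDirProd (R Quot I) (R Quot J))"
      using cI cJ by (rule RDirProd_cring)
    have "carrier (R Quot I) \<noteq> {}" "carrier (R Quot J) \<noteq> {}"
      using I.rcos_image_carrier J.rcos_image_carrier zero_closed by blast+
    then have "dimv_le (R Quot I) d" "dimv_le (R Quot J) d"
      using ring_hom_cring.dimv_le_image[OF ring_hom_cringI[OF cIJ cI fst_ring_hom] _ prod]
        ring_hom_cring.dimv_le_image[OF ring_hom_cringI[OF cIJ cJ snd_ring_hom] _ prod]
      by simp_all
    then show "dimv_le R d"
      using hI hJ I.rcos_image_carrier J.rcos_image_carrier joint_inj
      by (intro dimv_le_subdirect[of R "R Quot I" "(+>) I" "R Quot J" "(+>) J"]) auto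
  qed
qed

lemma (in cring) ideal_ann_set:
  assumes "S \<subseteq> carrier R"
  shows "ideal (ann_set R S) R"
proof (rule idealI)
  show "subgroup (ann_set R S) (add_monoid R)"
  proof (rule add.subgroupI)
    fix u v assume "u \<in> ann_set R S" "v \<in> ann_set R S"
    then show "\<ominus> u \<in> ann_set R S" "u \<oplus> v \<in> ann_set R S"
      using assms by (auto simp: ann_set_def r_minus r_distr subset_iff)
  qed (use assms in \<open>auto simp: ann_set_def subset_iff intro!: exI[of _ \<zero>]\<close>)
next
  fix u w assume "u \<in> ann_set R S" "w \<in> carrier R"
  then show "w \<otimes> u \<in> ann_set R S" "u \<otimes> w \<in> ann_set R S"
    using assms by (auto simp: ann_set_def subset_iff) (metis m_lcomm r_null, metis m_assoc l_null)
qed (rule ring_axioms)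

lemma ann_elem_eq_ann_set: "ann_elem R a = ann_set R {a}"
  by (auto simp: ann_elem_def ann_set_def)

lemma reduced_ring_inter_ann_set:
  assumes "reduced_ring R"
  shows "S \<inter> ann_set R S \<subseteq> {\<zero>\<^bsub>R\<^esub>}"
proof
  interpret cring R
    using assms by (simp add: reduced_ring_def)
  fix x assume "x \<in> S \<inter> ann_set R S"
  then have "x \<in> carrier R" "x \<otimes>\<^bsub>R\<^esub> x = \<zero>\<^bsub>R\<^esub>"
    by (auto simp: ann_set_def)
  then have "x \<in> carrier R" "x [^]\<^bsub>R\<^esub> (2::nat) = \<zero>\<^bsub>R\<^esub>"
    by (simp_all add: numeral_2_eq_2)
  then show "x \<in> {\<zero>\<^bsub>R\<^esub>}"
    using assms unfolding reduced_ring_def by blast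
qed

theorem lemma3p3:
  fixes R :: "('a, 'b) ring_scheme" and a :: 'a and d :: int
  assumes "reduced_ring R" and "a \<in> carrier R" and "d \<ge> -1"
  shows "dimv_le R d \<longleftrightarrow> dimv_le (split_ring R a) d"
proof -
  interpret cring R
    using assms(1) by (simp add: reduced_ring_def)
  have "ideal (ann_elem R a) R"
    unfolding ann_elem_eq_ann_set using assms(2) by (intro ideal_ann_set) auto
  moreover have "ideal (ann_set R (ann_elem R a)) R"
    by (rule ideal_ann_set) (auto simp: ann_elem_def)
  moreover have "ann_elem R a \<inter> ann_set R (ann_elem R a) \<subseteq> {\<zero>\<^bsub>R\<^esub>}"
    using assms(1) by (rule reduced_ring_inter_ann_set)
  ultimately show ?thesis
    unfolding split_ring_def by (rule dimv_le_iff_RDirProd_Quot)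
qed

end
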